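(* Let $G$ be a connected graph of girth $s$ and let $k\ge 2$. Suppose $G$ has $k$ level-disjoint partitions $\mathcal{S}^1,\dots,\mathcal{S}^k$ rooted in a vertex $v$ of optimal height, i.e. $\max_i h(\mathcal{S}^i)=\mathrm{ecc}(v)+k-1$ if $G$ is non-bipartite and $\max_i h(\mathcal{S}^i)=\mathrm{ecc}(v)+2k-2$ if $G$ is bipartite. Then $\mathrm{ecc}(v)\ge s-2$ if $G$ is non-bipartite, and $\mathrm{ecc}(v)\ge s-3$ if $G$ is bipartite.
   Context: For $S\subseteq V(G)$, $N(S)$ is the set of vertices adjacent to some vertex of $S$. A level partition of $G$ is a tuple $\mathcal{S}=(S_0,\dots,S_h)$ of pairwise disjoint sets with union $V(G)$ such that $S_i\subseteq N(S_{i-1})$ for $1\le i\le h$; $h(\mathcal{S})=h$ is its height; it is rooted in $v$ if $S_0=\{v\}$. Level partitions are level-disjoint if for every two of them $\mathcal{S},\mathcal{T}$, $S_i\cap T_i=\emptyset$ for every $1\le i\le\min(h(\mathcal{S}),h(\mathcal{T}))$. The girth is the length of a shortest cycle; $\mathrm{ecc}(v)=\max_{u} d(u,v)$. *)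

theory Defs
  imports Main
begin

definition simple_graph :: "'a set \<Rightarrow> ('a \<Rightarrow> 'a \<Rightarrow> bool) \<Rightarrow> bool" where
  "simple_graph V E \<longleftrightarrow> finite V \<and> V \<noteq> {} \<and>
     (\<forall>x y. E x y \<longrightarrow> x \<in> V \<and> y \<in> V) \<and>
     (\<forall>x y. E x y \<longrightarrow> E y x) \<and> (\<forall>x. \<not> E x x)"

definition is_walk :: "'a set \<Rightarrow> ('a \<Rightarrow> 'a \<Rightarrow> bool) \<Rightarrow> 'a list \<Rightarrow> bool" where
  "is_walk V E p \<longleftrightarrow> p \<noteq> [] \<and> set p \<subseteq> V \<and>
     (\<forall>i. Suc i < length p \<longrightarrow> E (p ! i) (p ! Suc i))"

definition connected_graph :: "'a set \<Rightarrow> ('a \<Rightarrow> 'a \<Rightarrow> bool) \<Rightarrow> bool" where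
  "connected_graph V E \<longleftrightarrow>
     (\<forall>u\<in>V. \<forall>w\<in>V. \<exists>p. is_walk V E p \<and> hd p = u \<and> last p = w)"

definition dist :: "'a set \<Rightarrow> ('a \<Rightarrow> 'a \<Rightarrow> bool) \<Rightarrow> 'a \<Rightarrow> 'a \<Rightarrow> nat" where
  "dist V E u w = (LEAST n. \<exists>p. is_walk V E p \<and> hd p = u \<and> last p = w \<and> length p = Suc n)"

definition ecc :: "'a set \<Rightarrow> ('a \<Rightarrow> 'a \<Rightarrow> bool) \<Rightarrow> 'a \<Rightarrow> nat" where
  "ecc V E v = Max ((\<lambda>u. dist V E u v) ` V)"

definition bipartite :: "'a set \<Rightarrow> ('a \<Rightarrow> 'a \<Rightarrow> bool) \<Rightarrow> bool" where
  "bipartite V E \<longleftrightarrow> (\<exists>A\<subseteq>V. \<forall>x y. E x y \<longrightarrow> (x \<in> A \<longleftrightarrow> y \<notin> A))"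

definition is_cycle :: "'a set \<Rightarrow> ('a \<Rightarrow> 'a \<Rightarrow> bool) \<Rightarrow> 'a list \<Rightarrow> bool" where
  "is_cycle V E c \<longleftrightarrow> length c \<ge> 3 \<and> distinct c \<and> is_walk V E c \<and> E (last c) (hd c)"

definition has_girth :: "'a set \<Rightarrow> ('a \<Rightarrow> 'a \<Rightarrow> bool) \<Rightarrow> nat \<Rightarrow> bool" where
  "has_girth V E s \<longleftrightarrow> (\<exists>c. is_cycle V E c \<and> length c = s) \<and>
     (\<forall>c. is_cycle V E c \<longrightarrow> s \<le> length c)"

definition nbhd :: "('a \<Rightarrow> 'a \<Rightarrow> bool) \<Rightarrow> 'a set \<Rightarrow> 'a set" where
  "nbhd E S = {u. \<exists>w\<in>S. E w u}"

text \<open>A level partition (S_0,...,S_h) is represented by the list [S_0,...,S_h].\<close>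
definition level_partition :: "'a set \<Rightarrow> ('a \<Rightarrow> 'a \<Rightarrow> bool) \<Rightarrow> 'a set list \<Rightarrow> bool" where
  "level_partition V E S \<longleftrightarrow> S \<noteq> [] \<and>
     (\<forall>i j. i < j \<and> j < length S \<longrightarrow> S ! i \<inter> S ! j = {}) \<and>
     \<Union> (set S) = V \<and>
     (\<forall>i. 1 \<le> i \<and> i < length S \<longrightarrow> S ! i \<subseteq> nbhd E (S ! (i - 1)))"

definition height :: "'a set list \<Rightarrow> nat" where
  "height S = length S - 1"

definition rooted_in :: "'a set list \<Rightarrow> 'a \<Rightarrow> bool" where
  "rooted_in S v \<longleftrightarrow> S \<noteq> [] \<and> S ! 0 = {v}"

definition level_disjoint :: "'a set list \<Rightarrow> 'a set list \<Rightarrow> bool" where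
  "level_disjoint S T \<longleftrightarrow>
     (\<forall>i. 1 \<le> i \<and> i \<le> min (height S) (height T) \<longrightarrow> S ! i \<inter> T ! i = {})"

end

theory Submission imports Defs begin

text \<open>Fix a neighbour u of the root v. In each partition u sits at some level \<ge> 1, and by
level-disjointness these k levels are distinct. If u lies at level i \<ge> 2, the path from v
through the levels down to u closes, with the edge uv, a cycle of length i + 1, so i \<ge> s - 1.
Hence at least k - 1 of the levels are distinct numbers \<ge> s - 1, and the largest of them,
which is at most the maximal height, is \<ge> s + k - 3. In the bipartite case all levels of u
are odd, so they are spread at least 2 apart and the largest is \<ge> s + 2k - 5.\<close>

lemma level_partition_covers:
  assumes "level_partition V E S" and "x \<in> V"
  obtains i where "i < length S" and "x \<in> S ! i"
  using assms unfolding level_partition_def by (metis UnionE in_set_conv_nth)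

lemma rooted_level_partition_path:
  assumes lp: "level_partition V E S" and r: "rooted_in S v"
  shows "i < length S \<Longrightarrow> x \<in> S ! i \<Longrightarrow>
    \<exists>f. f 0 = v \<and> f i = x \<and> (\<forall>j\<le>i. f j \<in> S ! j) \<and> (\<forall>j<i. E (f j) (f (Suc j)))"
proof (induction i arbitrary: x)
  case 0
  then show ?case using r by (intro exI[of _ "\<lambda>_. v"]) (auto simp: rooted_in_def)
next
  case (Suc i)
  have "S ! Suc i \<subseteq> nbhd E (S ! i)"
    using lp Suc.prems(1) unfolding level_partition_def by (metis diff_Suc_1 le_add1 plus_1_eq_Suc)
  then obtain w where w: "w \<in> S ! i" "E w x" using Suc.prems(2) unfolding nbhd_def by blast
  then obtain f where f: "f 0 = v" "f i = w" "\<forall>j\<le>i. f j \<in> S ! j" "\<forall>j<i. E (f j) (f (Suc j))"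
    using Suc.IH Suc.prems(1) by fastforce
  show ?case
    using f w Suc.prems(2)
    by (intro exI[of _ "f(Suc i := x)"]) (auto simp: le_Suc_eq less_Suc_eq)
qed

lemma inj_on_level_transversal:
  assumes "level_partition V E S" and "i < length S" and "\<forall>j\<le>i. f j \<in> S ! j"
  shows "inj_on f {0..i}"
proof (rule inj_onI, rule ccontr)
  fix a b assume ab: "a \<in> {0..i}" "b \<in> {0..i}" "f a = f b" "a \<noteq> b"
  then have "S ! min a b \<inter> S ! max a b = {}"
    using assms(1,2) unfolding level_partition_def by (auto simp: min_def max_def)
  moreover have "f a \<in> S ! a" "f b \<in> S ! b" using ab assms(3) by auto
  ultimately show False using ab by (cases "a < b") (auto simp: min_def max_def)
qed

lemma girth_le_Suc_level_of_root_neighbour: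
  assumes g: "simple_graph V E" and gi: "has_girth V E s"
    and lp: "level_partition V E S" and r: "rooted_in S v"
    and i: "i < length S" "2 \<le> i" and u: "u \<in> S ! i" "E v u"
  shows "s \<le> Suc i"
proof -
  obtain f where f: "f 0 = v" "f i = u" "\<forall>j\<le>i. f j \<in> S ! j" "\<forall>j<i. E (f j) (f (Suc j))"
    using rooted_level_partition_path[OF lp r i(1) u(1)] by blast
  define c where "c = map f [0..<Suc i]"
  have "set c \<subseteq> \<Union> (set S)"
    using f(3) i(1) unfolding c_def by (fastforce simp del: upt_Suc simp: less_Suc_eq_le)
  then have "set c \<subseteq> V" using lp unfolding level_partition_def by simp
  moreover have "distinct c"
    using inj_on_level_transversal[OF lp i(1) f(3)] unfolding c_def
    by (simp add: distinct_map atLeastLessThanSuc_atLeastAtMost del: upt_Suc)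
  moreover have "\<forall>j. Suc j < length c \<longrightarrow> E (c ! j) (c ! Suc j)"
    using f(4) unfolding c_def by (simp add: nth_map_upt del: upt_Suc)
  moreover have "E (last c) (hd c)"
    using f(1,2) u(2) g unfolding c_def simple_graph_def by (simp del: upt_Suc add: last_map hd_map)
  ultimately have "is_cycle V E c" using i(2) unfolding is_cycle_def is_walk_def c_def by simp
  then show ?thesis using gi unfolding has_girth_def c_def by fastforce
qed

lemma root_neighbour_level_cases:
  assumes "simple_graph V E" and "has_girth V E s"
    and "level_partition V E S" and r: "rooted_in S v"
    and "i < length S" and u: "u \<in> S ! i" "E v u"
  shows "i = 1 \<or> s - 1 \<le> i"
proof -
  have "i \<noteq> 0" using r u assms(1) unfolding rooted_in_def simple_graph_def by auto
  then show ?thesis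
    using girth_le_Suc_level_of_root_neighbour[OF assms(1-4,5) _ u] by (cases "i = 1") auto
qed

lemma walk_parity_in_bipartition:
  assumes A: "\<forall>x y. E x y \<longrightarrow> (x \<in> A \<longleftrightarrow> y \<notin> A)" and f: "\<forall>j<i. E (f j) (f (Suc j))"
  shows "j \<le> i \<Longrightarrow> f j \<in> A \<longleftrightarrow> (f 0 \<in> A \<longleftrightarrow> even j)"
proof (induction j)
  case (Suc j)
  then have "E (f j) (f (Suc j))" using f by simp
  then show ?case using Suc A by auto
qed simp

lemma bipartite_root_neighbour_level_odd:
  assumes "bipartite V E" and lp: "level_partition V E S" and r: "rooted_in S v"
    and "i < length S" and u: "u \<in> S ! i" "E v u"
  shows "odd i"
proof -
  obtain A where A: "\<forall>x y. E x y \<longrightarrow> (x \<in> A \<longleftrightarrow> y \<notin> A)"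
    using assms(1) unfolding bipartite_def by blast
  obtain f where f: "f 0 = v" "f i = u" "\<forall>j<i. E (f j) (f (Suc j))"
    using rooted_level_partition_path[OF lp r assms(4) u(1)] by blast
  show ?thesis using walk_parity_in_bipartition[OF A f(3) order_refl] f(1,2) A u(2) by blast
qed

lemma level_disjoint_partitions_levels_inj:
  assumes "\<forall>a\<in>I. \<forall>b\<in>I. a \<noteq> b \<longrightarrow> level_disjoint (P a) (P b)"
    and "\<forall>a\<in>I. lev a < length (P a) \<and> x \<in> P a ! lev a \<and> lev a \<noteq> 0"
  shows "inj_on lev I"
proof (rule inj_onI, rule ccontr)
  fix a b assume ab: "a \<in> I" "b \<in> I" "lev a = lev b" "a \<noteq> b"
  moreover have "1 \<le> lev a" "lev a \<le> min (height (P a)) (height (P b))"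
    using ab assms(2) unfolding height_def by fastforce+
  ultimately have "P a ! lev a \<inter> P b ! lev a = {}"
    using assms(1) unfolding level_disjoint_def by blast
  moreover have "x \<in> P a ! lev a" "x \<in> P b ! lev a" using ab assms(2) by auto
  ultimately show False by blast
qed

lemma Max_ge_lower_bound_plus_card:
  assumes "finite (A :: nat set)" and "A \<noteq> {}" and "\<forall>x\<in>A. m \<le> x"
  shows "m + card A - 1 \<le> Max A"
proof -
  have "A \<subseteq> {m..Max A}" using assms by auto
  then have "card A \<le> card {m..Max A}" by (intro card_mono) simp
  then have "card A \<le> Suc (Max A) - m" by simp
  moreover have "m \<le> Max A" using assms Max_in by blast
  ultimately show ?thesis by linarith
qed

lemma Max_ge_lower_bound_plus_twice_card_odd:
  assumes "finite (A :: nat set)" and "A \<noteq> {}" and "\<forall>x\<in>A. odd x \<and> m \<le> x"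
  shows "m + 2 * card A - 2 \<le> Max A"
proof -
  have "inj_on (\<lambda>x. x div 2) A"
    by (rule inj_onI) (metis assms(3) odd_two_times_div_two_succ)
  moreover have "(\<lambda>x. x div 2) ` A \<subseteq> {m div 2..Max A div 2}"
  proof (rule image_subsetI)
    fix x assume "x \<in> A"
    then show "x div 2 \<in> {m div 2..Max A div 2}"
      using div_le_mono[of m x 2] div_le_mono[of x "Max A" 2] assms(3) Max_ge[OF assms(1)] by simp
  qed
  ultimately have "card A \<le> card {m div 2..Max A div 2}"
    using card_mono[OF finite_atLeastAtMost] card_image by metis
  then have "card A \<le> Suc (Max A div 2) - m div 2" by simp
  moreover obtain a where a: "Max A = 2 * a + 1" using assms Max_in by (meson oddE)
  moreover from a have "Max A div 2 = a" by simp
  moreover have "m \<le> 2 * (m div 2) + 1" by simp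
  moreover have "card A > 0" using assms(1,2) by (simp add: card_gt_0_iff)
  ultimately show ?thesis by linarith
qed

lemma cycle_has_other_vertex:
  assumes "is_cycle V E c"
  obtains x where "x \<in> V" and "x \<noteq> v"
proof -
  have "card (set c) \<ge> 3" using assms unfolding is_cycle_def by (simp add: distinct_card)
  then have "\<not> set c \<subseteq> {v}" using card_mono[of "{v}" "set c"] by auto
  then show ?thesis using that assms unfolding is_cycle_def is_walk_def by blast
qed

lemma rooted_level_partition_root_neighbour:
  assumes lp: "level_partition V E S" and r: "rooted_in S v" and "x \<in> V" "x \<noteq> v"
  obtains u where "E v u"
proof -
  obtain i where i: "i < length S" "x \<in> S ! i" using level_partition_covers[OF lp assms(3)] .
  have "0 < i"
  proof (rule ccontr)
    assume "\<not> 0 < i"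
    then have "x \<in> S ! 0" using i(2) by simp
    then show False using r assms(4) unfolding rooted_in_def by simp
  qed
  obtain f where "f 0 = v" "\<forall>j<i. E (f j) (f (Suc j))"
    using rooted_level_partition_path[OF lp r i] by blast
  then have "E v (f (Suc 0))" using \<open>0 < i\<close> by metis
  then show ?thesis by (rule that)
qed

lemma root_neighbour_levels:
  assumes g: "simple_graph V E" and gi: "has_girth V E s" and "finite I" and "2 \<le> card I"
    and lp: "\<forall>a\<in>I. level_partition V E (P a) \<and> rooted_in (P a) v"
    and disj: "\<forall>a\<in>I. \<forall>b\<in>I. a \<noteq> b \<longrightarrow> level_disjoint (P a) (P b)"
    and vu: "E v u"
  obtains L where "finite L" and "L \<noteq> {}" and "card I - 1 \<le> card L"
    and "\<forall>y\<in>L. s - 1 \<le> y \<and> (bipartite V E \<longrightarrow> odd y)"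
    and "Max L \<le> Max ((\<lambda>a. height (P a)) ` I)"
proof -
  have "u \<in> V" using g vu unfolding simple_graph_def by blast
  then have "\<forall>a\<in>I. \<exists>i. i < length (P a) \<and> u \<in> P a ! i"
    using level_partition_covers lp by metis
  then obtain lev where lev: "\<forall>a\<in>I. lev a < length (P a) \<and> u \<in> P a ! lev a"
    by metis
  have cases: "lev a = 1 \<or> s - 1 \<le> lev a" if "a \<in> I" for a
    using root_neighbour_level_cases[OF g gi _ _ _ _ vu] lp lev that by blast
  have "3 \<le> s" using gi unfolding has_girth_def is_cycle_def by auto
  then have "lev a \<noteq> 0" if "a \<in> I" for a using cases[OF that] by linarith
  then have inj: "inj_on lev I"
    using lev by (intro level_disjoint_partitions_levels_inj[OF disj]) blast
  define L where "L = lev ` I - {1}"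
  have "finite L" using \<open>finite I\<close> unfolding L_def by simp
  have card: "card I - 1 \<le> card L"
    using card_Diff_singleton_if[of "lev ` I" 1] card_image[OF inj] unfolding L_def by simp
  then have "L \<noteq> {}" using \<open>2 \<le> card I\<close> by auto
  have "odd (lev a)" if "bipartite V E" "a \<in> I" for a
    using bipartite_root_neighbour_level_odd[OF that(1) _ _ _ _ vu] lp lev that(2) by blast
  then have bounds: "\<forall>y\<in>L. s - 1 \<le> y \<and> (bipartite V E \<longrightarrow> odd y)"
    using cases unfolding L_def by blast
  obtain a where a: "a \<in> I" "Max L = lev a"
    using Max_in[OF \<open>finite L\<close> \<open>L \<noteq> {}\<close>] unfolding L_def by blast
  have "lev a \<le> height (P a)" using lev a(1) unfolding height_def by fastforce
  also have "\<dots> \<le> Max ((\<lambda>a. height (P a)) ` I)" using a(1) \<open>finite I\<close> by (intro Max_ge) auto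
  finally have "Max L \<le> Max ((\<lambda>a. height (P a)) ` I)" using a(2) by simp
  with \<open>finite L\<close> \<open>L \<noteq> {}\<close> card bounds show ?thesis by (rule that)
qed

theorem proposition7:
  fixes V :: "'a set" and E :: "'a \<Rightarrow> 'a \<Rightarrow> bool"
    and P :: "nat \<Rightarrow> 'a set list" and v :: 'a and s k :: nat
  assumes "simple_graph V E" and "connected_graph V E" and "has_girth V E s"
    and "k \<ge> 2" and "v \<in> V"
    and "\<forall>i\<in>{1..k}. level_partition V E (P i) \<and> rooted_in (P i) v"
    and "\<forall>i\<in>{1..k}. \<forall>j\<in>{1..k}. i \<noteq> j \<longrightarrow> level_disjoint (P i) (P j)"
    and "\<not> bipartite V E \<longrightarrow> Max ((\<lambda>i. height (P i)) ` {1..k}) = ecc V E v + k - 1"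
    and "bipartite V E \<longrightarrow> Max ((\<lambda>i. height (P i)) ` {1..k}) = ecc V E v + 2 * k - 2"
  shows "(\<not> bipartite V E \<longrightarrow> ecc V E v \<ge> s - 2) \<and>
         (bipartite V E \<longrightarrow> ecc V E v \<ge> s - 3)"
proof -
  obtain c where "is_cycle V E c" using assms(3) unfolding has_girth_def by blast
  then obtain x where "x \<in> V" "x \<noteq> v" by (rule cycle_has_other_vertex)
  moreover have "level_partition V E (P 1)" "rooted_in (P 1) v" using assms(4,6) by auto
  ultimately obtain u where "E v u" using rooted_level_partition_root_neighbour by metis
  then obtain L where L: "finite L" "L \<noteq> {}" "k - 1 \<le> card L"
      "\<forall>y\<in>L. s - 1 \<le> y \<and> (bipartite V E \<longrightarrow> odd y)"
    and Max_le: "Max L \<le> Max ((\<lambda>i. height (P i)) ` {1..k})"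
    using root_neighbour_levels[OF assms(1,3) _ _ assms(6,7)] assms(4) by auto
  show ?thesis
  proof (intro conjI impI)
    assume "\<not> bipartite V E"
    moreover have "s - 1 + card L - 1 \<le> Max L"
      using Max_ge_lower_bound_plus_card[OF L(1,2)] L(4) by blast
    ultimately show "s - 2 \<le> ecc V E v" using Max_le L(3) assms(4,8) by linarith
  next
    assume "bipartite V E"
    then have "s - 1 + 2 * card L - 2 \<le> Max L"
      using Max_ge_lower_bound_plus_twice_card_odd[OF L(1,2)] L(4) by blast
    then show "s - 3 \<le> ecc V E v" using \<open>bipartite V E\<close> Max_le L(3) assms(4,9) by linarith
  qed
qed

end
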